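(* For the gossip USD, distinct opinions $i,j\in[k]$, $\varepsilon\in[0,1]$, and every $t\ge1$, writing $\delta^{(\varepsilon)}_t=\alpha_t(i)-(1+\varepsilon)\alpha_t(j)$ and $\delta_t=\delta^{(0)}_t$: (1) $\mathbb E_{t-1}[\delta^{(\varepsilon)}_t]=\delta^{(\varepsilon)}_{t-1}\big(\alpha_{t-1}(i)+\alpha_{t-1}(j)+2(1-\beta_{t-1})\big)+\varepsilon\,\alpha_{t-1}(i)\alpha_{t-1}(j)$. In particular, if $\beta_{t-1}>0$, then $\mathbb E_{t-1}[\delta_t]=\delta_{t-1}\Big(1+\alpha_{t-1}(i)+\alpha_{t-1}(j)-\frac{\gamma_{t-1}+\psi_{t-1}}{\beta_{t-1}}\Big)$. (2) $\mathrm{Var}_{t-1}[\delta_t]\ge\frac{(1-\beta_{t-1})^2}{n}\big(\alpha_{t-1}(i)+\alpha_{t-1}(j)\big)$. (3) Conditioned on $\mathcal F_{t-1}$, $\delta^{(\varepsilon)}_t-\mathbb E_{t-1}[\delta^{(\varepsilon)}_t]$ satisfies the $\big(\frac{2(1+\varepsilon)}{n},\ \frac2n(\alpha_{t-1}(i)+(1+\varepsilon)^2\alpha_{t-1}(j))\big)$-Bernstein condition.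
   Context: Vertex set $V$, $|V|=n$; opinions in $\Sigma=[k]\cup\{\bot\}$ ($\bot$ = undecided). USD update rule: $\mathsf{update}(\sigma_1,\sigma_2)=\bot$ if $\sigma_1,\sigma_2\in[k]$ and $\sigma_1\ne\sigma_2$; $=\sigma_2$ if $\sigma_1=\bot$; $=\sigma_1$ otherwise. Gossip USD: given $\mathrm{opn}_t\in\Sigma^V$, every $u\in V$ independently picks $v$ uniformly from $V$ and sets $\mathrm{opn}_{t+1}(u)=\mathsf{update}(\mathrm{opn}_t(u),\mathrm{opn}_t(v))$. Notation: $\alpha_t(i)=|\{u:\mathrm{opn}_t(u)=i\}|/n$, $\beta_t=\sum_{i\in[k]}\alpha_t(i)$, $\gamma_t=\sum_{i\in[k]}\alpha_t(i)^2$, $\psi_t=\beta_t(2\beta_t-1)-\gamma_t$. $(\mathcal F_t)$ is the natural filtration; $\mathbb E_{t-1},\mathrm{Var}_{t-1}$ are conditional on $\mathcal F_{t-1}$. Bernstein condition: for $D,s\ge0$, $X$ satisfies the $(D,s)$-Bernstein condition if $\mathbb E[e^{\lambda X}]\le\exp\!\big(\frac{\lambda^2 s/2}{1-|\lambda|D/3}\big)$ for all real $\lambda$ with $|\lambda|D<3$ (one-sided: only for $\lambda\ge0$). Conditioned on $\mathcal F_{t-1}$: the same with $\mathbb E_{t-1}$, almost surely. *)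

theory Defs
  imports "HOL-Probability.Probability"
begin

text \<open>Opinions: None is the undecided opinion, Some i with i in {1..k} a decided opinion.\<close>

fun usd_update :: "nat option \<Rightarrow> nat option \<Rightarrow> nat option" where
  "usd_update None s2 = s2"
| "usd_update (Some a) None = Some a"
| "usd_update (Some a) (Some b) = (if a = b then Some a else None)"

text \<open>One step of gossip USD from configuration opn: every vertex u of V independently
  picks v uniformly from V and updates. This is the law of opn_t given F_(t-1).\<close>
definition gossip_step :: "'v set \<Rightarrow> ('v \<Rightarrow> nat option) \<Rightarrow> ('v \<Rightarrow> nat option) pmf" where
  "gossip_step V opn =
     map_pmf (\<lambda>c u. usd_update (opn u) (opn (c u))) (Pi_pmf V undefined (\<lambda>_. pmf_of_set V))"

definition alpha :: "'v set \<Rightarrow> ('v \<Rightarrow> nat option) \<Rightarrow> nat \<Rightarrow> real" where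
  "alpha V opn i = real (card {u \<in> V. opn u = Some i}) / real (card V)"

definition beta :: "'v set \<Rightarrow> nat \<Rightarrow> ('v \<Rightarrow> nat option) \<Rightarrow> real" where
  "beta V k opn = (\<Sum>i\<in>{1..k}. alpha V opn i)"

definition gamma :: "'v set \<Rightarrow> nat \<Rightarrow> ('v \<Rightarrow> nat option) \<Rightarrow> real" where
  "gamma V k opn = (\<Sum>i\<in>{1..k}. (alpha V opn i)\<^sup>2)"

definition psi :: "'v set \<Rightarrow> nat \<Rightarrow> ('v \<Rightarrow> nat option) \<Rightarrow> real" where
  "psi V k opn = beta V k opn * (2 * beta V k opn - 1) - gamma V k opn"

definition bernstein_cond :: "'a measure \<Rightarrow> ('a \<Rightarrow> real) \<Rightarrow> real \<Rightarrow> real \<Rightarrow> bool" where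
  "bernstein_cond M X D s \<longleftrightarrow>
     (\<forall>l::real. \<bar>l\<bar> * D < 3 \<longrightarrow>
        (\<integral>x. exp (l * X x) \<partial>M) \<le> exp ((l\<^sup>2 * s / 2) / (1 - \<bar>l\<bar> * D / 3)))"

end

theory Submission
  imports Defs
begin

(* Given the configuration at time t-1, the new opinions of distinct vertices are independent,
   since each depends only on the vertex's own uniformly chosen partner. Hence every statistic
   of the form sum_u phi(opn_t u), in particular delta_t, is a sum of independent bounded terms.
   Its mean is obtained by counting pairs (u, w) according to the update rule, which gives
   E alpha_t(l) = alpha(l) (alpha(l) + 2 (1 - beta)); its variance is the sum of the per-vertex
   variances, and the undecided vertices alone already contribute the claimed lower bound; the
   Bernstein condition follows by multiplying the per-vertex moment generating functions, each
   bounded with exp x <= 1 + x + x^2 / 2 / (1 - |x| / 3). *)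

lemma finite_set_Pi_pmf:
  assumes "finite A" "\<And>x. x \<in> A \<Longrightarrow> finite (set_pmf (p x))"
  shows "finite (set_pmf (Pi_pmf A dflt p))"
  using assms by (auto simp: set_Pi_pmf)

lemma expectation_Pi_pmf_component:
  fixes f :: "'b \<Rightarrow> real"
  assumes "finite A" "x \<in> A"
  shows "measure_pmf.expectation (Pi_pmf A dflt p) (\<lambda>c. f (c x)) = measure_pmf.expectation (p x) f"
proof -
  have "measure_pmf.expectation (Pi_pmf A dflt p) (\<lambda>c. f (c x)) =
      measure_pmf.expectation (map_pmf (\<lambda>c. c x) (Pi_pmf A dflt p)) f"
    by simp
  also have "\<dots> = measure_pmf.expectation (p x) f"
    using assms by (simp add: Pi_pmf_component)
  finally show ?thesis .
qed

lemma expectation_Pi_pmf_sum: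
  fixes f :: "'a \<Rightarrow> 'b \<Rightarrow> real"
  assumes "finite A" "\<And>x. x \<in> A \<Longrightarrow> finite (set_pmf (p x))"
  shows "measure_pmf.expectation (Pi_pmf A dflt p) (\<lambda>c. \<Sum>x\<in>A. f x (c x))
       = (\<Sum>x\<in>A. measure_pmf.expectation (p x) (f x))"
  using assms
  by (simp add: Bochner_Integration.integral_sum integrable_measure_pmf_finite
      finite_set_Pi_pmf expectation_Pi_pmf_component)

lemma expectation_Pi_pmf_mult:
  fixes f g :: "'b \<Rightarrow> real"
  assumes "finite A" "\<And>x. x \<in> A \<Longrightarrow> finite (set_pmf (p x))" "x \<in> A" "y \<in> A" "x \<noteq> y"
  shows "measure_pmf.expectation (Pi_pmf A dflt p) (\<lambda>c. f (c x) * g (c y))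
       = measure_pmf.expectation (p x) f * measure_pmf.expectation (p y) g"
proof -
  let ?P = "measure_pmf (Pi_pmf A dflt p)"
  have indep: "prob_space.indep_vars ?P (\<lambda>_. borel) (\<lambda>z c. (if z = x then f else g) (c z)) {x, y}"
    using assms
    by (intro prob_space.indep_vars_subset[OF _ prob_space.indep_vars_compose2[OF _ indep_vars_Pi_pmf]])
      (auto simp: measure_pmf.prob_space_axioms)
  have "measure_pmf.expectation (Pi_pmf A dflt p) (\<lambda>c. \<Prod>z\<in>{x, y}. (if z = x then f else g) (c z))
      = (\<Prod>z\<in>{x, y}. measure_pmf.expectation (Pi_pmf A dflt p) (\<lambda>c. (if z = x then f else g) (c z)))"
    using assms
    by (intro prob_space.indep_vars_lebesgue_integral[OF measure_pmf.prob_space_axioms _ indep])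
      (auto simp: integrable_measure_pmf_finite finite_set_Pi_pmf)
  then show ?thesis
    using assms by (simp add: expectation_Pi_pmf_component)
qed

lemma variance_Pi_pmf_sum:
  fixes f :: "'a \<Rightarrow> 'b \<Rightarrow> real"
  assumes "finite A" "\<And>x. x \<in> A \<Longrightarrow> finite (set_pmf (p x))"
  shows "measure_pmf.variance (Pi_pmf A dflt p) (\<lambda>c. \<Sum>x\<in>A. f x (c x))
       = (\<Sum>x\<in>A. measure_pmf.variance (p x) (f x))"
proof -
  define h where "h x = (\<lambda>w. f x w - measure_pmf.expectation (p x) (f x))" for x
  have mean_h: "measure_pmf.expectation (p x) (h x) = 0" if "x \<in> A" for x
    using assms(2)[OF that] by (simp add: h_def integrable_measure_pmf_finite)
  have cross: "measure_pmf.expectation (Pi_pmf A dflt p) (\<lambda>c. h x (c x) * h y (c y))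
      = (if x = y then measure_pmf.variance (p x) (f x) else 0)" if "x \<in> A" "y \<in> A" for x y
  proof (cases "x = y")
    case True
    then show ?thesis
      using expectation_Pi_pmf_component[OF assms(1) \<open>x \<in> A\<close>,
          where f="\<lambda>w. h x w * h x w" and dflt=dflt and p=p]
      by (simp add: h_def power2_eq_square)
  next
    case False
    then show ?thesis
      using expectation_Pi_pmf_mult[OF assms that False, where f="h x" and g="h y"] mean_h that by simp
  qed
  have "measure_pmf.variance (Pi_pmf A dflt p) (\<lambda>c. \<Sum>x\<in>A. f x (c x))
      = measure_pmf.expectation (Pi_pmf A dflt p) (\<lambda>c. \<Sum>x\<in>A. \<Sum>y\<in>A. h x (c x) * h y (c y))"
  proof -
    have "(\<Sum>x\<in>A. f x (c x)) - (\<Sum>x\<in>A. measure_pmf.expectation (p x) (f x)) = (\<Sum>x\<in>A. h x (c x))"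
      for c by (simp add: h_def sum_subtractf)
    then show ?thesis
      by (simp add: expectation_Pi_pmf_sum assms power2_eq_square sum_product)
  qed
  also have "\<dots> = (\<Sum>x\<in>A. \<Sum>y\<in>A. if x = y then measure_pmf.variance (p x) (f x) else 0)"
    using assms
    by (simp add: Bochner_Integration.integral_sum integrable_measure_pmf_finite finite_set_Pi_pmf cross)
  finally show ?thesis
    using assms(1) by simp
qed

lemma two_mult_three_power_le_fact: "2 * 3 ^ n \<le> (fact (n + 2) :: real)"
proof (induction n)
  case 0
  then show ?case by simp
next
  case (Suc n)
  have "2 * 3 ^ Suc n = 3 * (2 * 3 ^ n :: real)"
    by simp
  also have "\<dots> \<le> of_nat (n + 3) * fact (n + 2)"
    using Suc.IH by (intro mult_mono) auto
  also have "\<dots> = fact (Suc n + 2)"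
    by (simp add: algebra_simps)
  finally show ?case .
qed

(* Since (n + 2)! \<ge> 2 * 3 ^ n, the tail of the exponential series is dominated by a geometric
   series of ratio |x| / 3. *)
lemma exp_le_bernstein:
  fixes x :: real
  assumes "\<bar>x\<bar> < 3"
  shows "exp x \<le> 1 + x + x\<^sup>2 / 2 / (1 - \<bar>x\<bar> / 3)"
proof -
  define a where "a n = inverse (fact (n + 2)) * x ^ (n + 2)" for n
  define b where "b n = x\<^sup>2 / 2 * (\<bar>x\<bar> / 3) ^ n" for n
  have ratio: "norm (\<bar>x\<bar> / 3) < 1"
    using assms by simp
  have b_summable: "summable b"
    unfolding b_def by (intro summable_mult summable_geometric ratio)
  have a_le_b: "norm (a n) \<le> b n" for n
  proof -
    have "norm (a n) = \<bar>x\<bar> ^ (n + 2) / fact (n + 2)"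
      by (simp add: a_def power_abs abs_mult divide_inverse mult.commute del: fact_Suc)
    also have "\<dots> \<le> \<bar>x\<bar> ^ (n + 2) / (2 * 3 ^ n)"
      by (intro divide_left_mono two_mult_three_power_le_fact) auto
    also have "\<dots> = b n"
      by (simp add: b_def power_add power_divide power2_eq_square power_abs[symmetric])
    finally show ?thesis .
  qed
  have a_summable: "summable a"
    by (rule summable_comparison_test[OF _ b_summable]) (use a_le_b in auto)
  have "exp x = 1 + x + suminf a"
    using exp_first_two_terms[of x] unfolding a_def real_scaleR_def .
  also have "suminf a \<le> suminf b"
    using a_le_b by (intro suminf_le a_summable b_summable) (auto intro: order_trans[OF abs_ge_self])
  also have "suminf b = x\<^sup>2 / 2 / (1 - \<bar>x\<bar> / 3)"
    unfolding b_def suminf_mult[OF summable_geometric[OF ratio]] suminf_geometric[OF ratio]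
    by simp
  finally show ?thesis
    by simp
qed

lemma bernstein_cond_mono:
  assumes "bernstein_cond M X D s" "s \<le> s'"
  shows "bernstein_cond M X D s'"
  unfolding bernstein_cond_def
proof (intro allI impI)
  fix l :: real
  assume l: "\<bar>l\<bar> * D < 3"
  have "l\<^sup>2 * s / 2 / (1 - \<bar>l\<bar> * D / 3) \<le> l\<^sup>2 * s' / 2 / (1 - \<bar>l\<bar> * D / 3)"
    using l assms(2) by (intro divide_right_mono mult_left_mono) auto
  then show "(\<integral>x. exp (l * X x) \<partial>M) \<le> exp (l\<^sup>2 * s' / 2 / (1 - \<bar>l\<bar> * D / 3))"
    using assms(1) l unfolding bernstein_cond_def by (meson exp_le_cancel_iff order_trans)
qed

lemma abs_sub_expectation_le:
  fixes f :: "'a \<Rightarrow> real"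
  assumes "finite (set_pmf p)"
    and "\<And>x y. x \<in> set_pmf p \<Longrightarrow> y \<in> set_pmf p \<Longrightarrow> \<bar>f x - f y\<bar> \<le> D"
    and "x \<in> set_pmf p"
  shows "\<bar>f x - measure_pmf.expectation p f\<bar> \<le> D"
proof -
  have "f x - measure_pmf.expectation p f = measure_pmf.expectation p (\<lambda>y. f x - f y)"
    using assms(1) by (simp add: integrable_measure_pmf_finite)
  also have "\<bar>\<dots>\<bar> \<le> measure_pmf.expectation p (\<lambda>y. \<bar>f x - f y\<bar>)"
    by (rule integral_abs_bound)
  also have "\<dots> \<le> measure_pmf.expectation p (\<lambda>_. D)"
    using assms by (intro integral_mono_AE AE_pmfI) (auto simp: integrable_measure_pmf_finite)
  finally show ?thesis
    by simp
qed

lemma bernstein_cond_centered_bounded: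
  fixes h :: "'a \<Rightarrow> real"
  assumes "finite (set_pmf p)" "measure_pmf.expectation p h = 0"
    and "\<And>x. x \<in> set_pmf p \<Longrightarrow> \<bar>h x\<bar> \<le> D"
  shows "bernstein_cond p h D (measure_pmf.expectation p (\<lambda>x. (h x)\<^sup>2))"
  unfolding bernstein_cond_def
proof (intro allI impI)
  fix l :: real
  assume l: "\<bar>l\<bar> * D < 3"
  define c where "c = l\<^sup>2 / 2 / (1 - \<bar>l\<bar> * D / 3)"
  have pointwise: "exp (l * h x) \<le> 1 + l * h x + c * (h x)\<^sup>2" if "x \<in> set_pmf p" for x
  proof -
    have lh: "\<bar>l * h x\<bar> \<le> \<bar>l\<bar> * D"
      using assms(3)[OF that] by (simp add: abs_mult mult_left_mono)
    have "exp (l * h x) \<le> 1 + l * h x + (l * h x)\<^sup>2 / 2 / (1 - \<bar>l * h x\<bar> / 3)"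
      using lh l by (intro exp_le_bernstein) linarith
    also have "(l * h x)\<^sup>2 / 2 / (1 - \<bar>l * h x\<bar> / 3) \<le> (l * h x)\<^sup>2 / 2 / (1 - \<bar>l\<bar> * D / 3)"
      using lh l by (intro divide_left_mono mult_pos_pos) auto
    also have "\<dots> = c * (h x)\<^sup>2"
      by (simp add: c_def power_mult_distrib)
    finally show ?thesis
      by simp
  qed
  have "measure_pmf.expectation p (\<lambda>x. exp (l * h x))
      \<le> measure_pmf.expectation p (\<lambda>x. 1 + l * h x + c * (h x)\<^sup>2)"
    using assms(1) by (intro integral_mono_AE AE_pmfI pointwise) (auto simp: integrable_measure_pmf_finite)
  also have "\<dots> = 1 + c * measure_pmf.expectation p (\<lambda>x. (h x)\<^sup>2)"
    using assms(1,2) by (simp add: integrable_measure_pmf_finite)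
  also have "\<dots> \<le> exp (c * measure_pmf.expectation p (\<lambda>x. (h x)\<^sup>2))"
    by (rule exp_ge_add_one_self)
  finally show "(\<integral>x. exp (l * h x) \<partial>p)
      \<le> exp (l\<^sup>2 * measure_pmf.expectation p (\<lambda>x. (h x)\<^sup>2) / 2 / (1 - \<bar>l\<bar> * D / 3))"
    by (simp add: c_def)
qed

lemma bernstein_cond_Pi_pmf_sum:
  fixes g :: "'a \<Rightarrow> 'b \<Rightarrow> real"
  assumes "finite A" "\<And>x. x \<in> A \<Longrightarrow> finite (set_pmf (p x))"
    and "\<And>x. x \<in> A \<Longrightarrow> bernstein_cond (p x) (g x) D (s x)"
  shows "bernstein_cond (Pi_pmf A dflt p) (\<lambda>c. \<Sum>x\<in>A. g x (c x)) D (\<Sum>x\<in>A. s x)"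
  unfolding bernstein_cond_def
proof (intro allI impI)
  fix l :: real
  assume l: "\<bar>l\<bar> * D < 3"
  define K where "K = 1 - \<bar>l\<bar> * D / 3"
  have "measure_pmf.expectation (Pi_pmf A dflt p) (\<lambda>c. exp (l * (\<Sum>x\<in>A. g x (c x))))
      = measure_pmf.expectation (Pi_pmf A dflt p) (\<lambda>c. \<Prod>x\<in>A. exp (l * g x (c x)))"
    by (simp add: sum_distrib_left exp_sum assms(1))
  also have "\<dots> = (\<Prod>x\<in>A. measure_pmf.expectation (p x) (\<lambda>w. exp (l * g x w)))"
    using assms(1,2) by (intro expectation_prod_Pi_pmf) (auto simp: integrable_measure_pmf_finite)
  also have "\<dots> \<le> (\<Prod>x\<in>A. exp (l\<^sup>2 * s x / 2 / K))"
    using assms(3) l unfolding bernstein_cond_def K_def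
    by (intro prod_mono conjI integral_nonneg_AE) auto
  also have "\<dots> = exp (l\<^sup>2 * (\<Sum>x\<in>A. s x) / 2 / K)"
    by (simp add: exp_sum[OF assms(1), symmetric] sum_distrib_left sum_divide_distrib)
  finally show "(\<integral>c. exp (l * (\<Sum>x\<in>A. g x (c x))) \<partial>Pi_pmf A dflt p)
      \<le> exp (l\<^sup>2 * (\<Sum>x\<in>A. s x) / 2 / (1 - \<bar>l\<bar> * D / 3))"
    by (simp add: K_def)
qed

definition undecided :: "'v set \<Rightarrow> ('v \<Rightarrow> nat option) \<Rightarrow> real" where
  "undecided V opn = real (card {u \<in> V. opn u = None}) / real (card V)"

lemma alpha_eq_sum:
  assumes "finite V"
  shows "alpha V c l = (\<Sum>u\<in>V. of_bool (c u = Some l)) / real (card V)"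
  using assms by (simp add: alpha_def Collect_conj_eq Int_commute)

lemma undecided_eq_sum:
  assumes "finite V"
  shows "undecided V c = (\<Sum>u\<in>V. of_bool (c u = None)) / real (card V)"
  using assms by (simp add: undecided_def Collect_conj_eq Int_commute)

lemma expectation_pmf_of_set_Some_eq_alpha:
  assumes "finite V" "V \<noteq> {}"
  shows "measure_pmf.expectation (pmf_of_set V) (\<lambda>w. of_bool (c w = Some l)) = alpha V c l"
  using assms by (simp add: integral_pmf_of_set alpha_eq_sum)

lemma expectation_pmf_of_set_None_eq_undecided:
  assumes "finite V" "V \<noteq> {}"
  shows "measure_pmf.expectation (pmf_of_set V) (\<lambda>w. of_bool (c w = None)) = undecided V c"
  using assms by (simp add: integral_pmf_of_set undecided_eq_sum)

lemma alpha_add_alpha_add_undecided_le: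
  assumes "finite V" "i \<noteq> j"
  shows "alpha V c i + alpha V c j + undecided V c \<le> 1"
proof (cases "V = {}")
  case False
  have "(\<Sum>u\<in>V. of_bool (c u = Some i) + of_bool (c u = Some j) + of_bool (c u = None)) \<le> (\<Sum>u\<in>V. 1 :: real)"
    using assms(2) by (intro sum_mono) auto
  then show ?thesis
    using assms(1) False
    by (simp add: alpha_eq_sum undecided_eq_sum sum.distrib add_divide_distrib[symmetric] divide_le_eq
        del: sum_of_bool_eq)
qed (simp add: alpha_def undecided_def)

lemma beta_eq_1_minus_undecided:
  assumes "finite V" "V \<noteq> {}" "\<forall>u\<in>V. opn u = None \<or> opn u \<in> Some ` {1..k}"
  shows "beta V k opn = 1 - undecided V opn"
proof -
  have opinion_partition: "(\<Sum>l\<in>{1..k}. of_bool (opn u = Some l)) = 1 - (of_bool (opn u = None) :: real)"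
    if "u \<in> V" for u
    using assms(3) that by (cases "opn u") (auto simp: of_bool_def)
  have "beta V k opn = (\<Sum>u\<in>V. \<Sum>l\<in>{1..k}. of_bool (opn u = Some l)) / real (card V)"
    unfolding beta_def alpha_eq_sum[OF assms(1)] sum_divide_distrib[symmetric] by (subst sum.swap) (rule refl)
  also have "\<dots> = (\<Sum>u\<in>V. 1 - of_bool (opn u = None)) / real (card V)"
    by (intro arg_cong[where f="\<lambda>x. x / real (card V)"] sum.cong refl opinion_partition)
  also have "\<dots> = 1 - undecided V opn"
    using assms(1,2) by (simp add: undecided_eq_sum sum_subtractf diff_divide_distrib del: sum_of_bool_eq)
  finally show ?thesis .
qed

lemma of_bool_usd_update_eq_Some:
  "(of_bool (usd_update x y = Some l) :: real) =
     of_bool (x = Some l) * (of_bool (y = Some l) + of_bool (y = None)) + of_bool (x = None) * of_bool (y = Some l)"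
  by (cases x; cases y) auto

lemma finite_set_gossip_step:
  assumes "finite V" "V \<noteq> {}"
  shows "finite (set_pmf (gossip_step V opn))"
  using assms by (simp add: gossip_step_def finite_set_Pi_pmf)

lemma expectation_gossip_step_sum:
  fixes \<phi> :: "nat option \<Rightarrow> real"
  assumes "finite V" "V \<noteq> {}"
  shows "measure_pmf.expectation (gossip_step V opn) (\<lambda>c. \<Sum>u\<in>V. \<phi> (c u))
       = (\<Sum>u\<in>V. measure_pmf.expectation (pmf_of_set V) (\<lambda>w. \<phi> (usd_update (opn u) (opn w))))"
  using assms expectation_Pi_pmf_sum[where f="\<lambda>u w. \<phi> (usd_update (opn u) (opn w))"]
  by (simp add: gossip_step_def)

lemma variance_gossip_step_sum:
  fixes \<phi> :: "nat option \<Rightarrow> real"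
  assumes "finite V" "V \<noteq> {}"
  shows "measure_pmf.variance (gossip_step V opn) (\<lambda>c. \<Sum>u\<in>V. \<phi> (c u))
       = (\<Sum>u\<in>V. measure_pmf.variance (pmf_of_set V) (\<lambda>w. \<phi> (usd_update (opn u) (opn w))))"
  using assms variance_Pi_pmf_sum[where f="\<lambda>u w. \<phi> (usd_update (opn u) (opn w))"]
  by (simp add: gossip_step_def)

lemma bernstein_cond_gossip_step_sum:
  fixes \<phi> :: "nat option \<Rightarrow> real"
  assumes "finite V" "V \<noteq> {}" "\<And>x y. \<bar>\<phi> x - \<phi> y\<bar> \<le> D"
  defines "X \<equiv> \<lambda>c. \<Sum>u\<in>V. \<phi> (c u)"
  shows "bernstein_cond (gossip_step V opn)
           (\<lambda>c. X c - measure_pmf.expectation (gossip_step V opn) X) D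
           (measure_pmf.expectation (gossip_step V opn) (\<lambda>c. \<Sum>u\<in>V. (\<phi> (c u))\<^sup>2))"
proof -
  define g where "g u = (\<lambda>w. \<phi> (usd_update (opn u) (opn w)))" for u
  define h where "h u = (\<lambda>w. g u w - measure_pmf.expectation (pmf_of_set V) (g u))" for u
  have "bernstein_cond (Pi_pmf V undefined (\<lambda>_. pmf_of_set V)) (\<lambda>c. \<Sum>u\<in>V. h u (c u)) D
      (\<Sum>u\<in>V. measure_pmf.expectation (pmf_of_set V) (\<lambda>w. (h u w)\<^sup>2))"
  proof (intro bernstein_cond_Pi_pmf_sum bernstein_cond_centered_bounded)
    show "measure_pmf.expectation (pmf_of_set V) (h u) = 0" for u
      using assms(1,2) by (simp add: h_def integrable_measure_pmf_finite)
    show "\<bar>h u w\<bar> \<le> D" if "w \<in> set_pmf (pmf_of_set V)" for u w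
      unfolding h_def using assms(1,2,3) that by (intro abs_sub_expectation_le) (auto simp: g_def)
  qed (use assms(1,2) in auto)
  moreover have "X (\<lambda>u. usd_update (opn u) (opn (c u))) - measure_pmf.expectation (gossip_step V opn) X
      = (\<Sum>u\<in>V. h u (c u))" for c
    using assms(1,2) by (simp add: X_def expectation_gossip_step_sum h_def g_def sum_subtractf)
  ultimately have bernstein_variance: "bernstein_cond (gossip_step V opn)
      (\<lambda>c. X c - measure_pmf.expectation (gossip_step V opn) X) D
      (\<Sum>u\<in>V. measure_pmf.expectation (pmf_of_set V) (\<lambda>w. (h u w)\<^sup>2))"
    by (simp add: bernstein_cond_def gossip_step_def)
  have "(\<Sum>u\<in>V. measure_pmf.expectation (pmf_of_set V) (\<lambda>w. (h u w)\<^sup>2))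
      \<le> (\<Sum>u\<in>V. measure_pmf.expectation (pmf_of_set V) (\<lambda>w. (g u w)\<^sup>2))"
    using assms(1,2)
    by (intro sum_mono) (simp add: h_def measure_pmf.variance_eq integrable_measure_pmf_finite)
  also have "\<dots> = measure_pmf.expectation (gossip_step V opn) (\<lambda>c. \<Sum>u\<in>V. (\<phi> (c u))\<^sup>2)"
    unfolding g_def by (rule expectation_gossip_step_sum[OF assms(1,2), symmetric])
  finally show ?thesis
    by (rule bernstein_cond_mono[OF bernstein_variance])
qed

lemma expectation_alpha_gossip_step:
  assumes "finite V" "V \<noteq> {}"
  shows "measure_pmf.expectation (gossip_step V opn) (\<lambda>c. alpha V c l)
       = alpha V opn l * (alpha V opn l + 2 * undecided V opn)"
proof -
  let ?n = "real (card V)"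
  have vertex: "measure_pmf.expectation (pmf_of_set V) (\<lambda>w. of_bool (usd_update (opn u) (opn w) = Some l))
      = of_bool (opn u = Some l) * (alpha V opn l + undecided V opn) + of_bool (opn u = None) * alpha V opn l"
    for u
    using assms
    by (simp add: of_bool_usd_update_eq_Some integrable_measure_pmf_finite expectation_pmf_of_set_Some_eq_alpha
        expectation_pmf_of_set_None_eq_undecided del: of_bool_eq)
  have "(\<lambda>c. alpha V c l) = (\<lambda>c. \<Sum>u\<in>V. of_bool (c u = Some l) / ?n)"
    using assms(1) by (simp add: alpha_eq_sum sum_divide_distrib del: sum_of_bool_eq)
  then have "measure_pmf.expectation (gossip_step V opn) (\<lambda>c. alpha V c l)
      = (\<Sum>u\<in>V. (of_bool (opn u = Some l) * (alpha V opn l + undecided V opn)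
                   + of_bool (opn u = None) * alpha V opn l) / ?n)"
    using expectation_gossip_step_sum[OF assms, where \<phi>="\<lambda>x. of_bool (x = Some l) / ?n"]
    by (simp add: vertex)
  also have "\<dots> = alpha V opn l * (alpha V opn l + undecided V opn) + undecided V opn * alpha V opn l"
    using assms(1) by (simp add: alpha_eq_sum undecided_eq_sum sum.distrib sum_divide_distrib[symmetric]
        sum_distrib_right[symmetric] add_divide_distrib del: sum_of_bool_eq)
  finally show ?thesis
    by (simp add: algebra_simps)
qed

lemma expectation_alpha_gossip_step_le:
  assumes "finite V" "V \<noteq> {}"
  shows "measure_pmf.expectation (gossip_step V opn) (\<lambda>c. alpha V c l) \<le> 2 * alpha V opn l"
proof -
  have nonneg: "0 \<le> alpha V opn l" "0 \<le> alpha V opn (Suc l)" "0 \<le> undecided V opn"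
    by (simp_all add: alpha_def undecided_def)
  then have "alpha V opn l + 2 * undecided V opn \<le> 2"
    using alpha_add_alpha_add_undecided_le[OF assms(1) n_not_Suc_n, of opn l] by linarith
  from mult_left_mono[OF this nonneg(1)] show ?thesis
    using assms by (simp add: expectation_alpha_gossip_step mult.commute)
qed

lemma expectation_alpha_diff_gossip_step:
  assumes "finite V" "V \<noteq> {}"
  shows "measure_pmf.expectation (gossip_step V opn) (\<lambda>c. alpha V c i - (1 + e) * alpha V c j)
       = (alpha V opn i - (1 + e) * alpha V opn j) * (alpha V opn i + alpha V opn j + 2 * undecided V opn)
         + e * alpha V opn i * alpha V opn j"
  using assms
  by (simp add: integrable_measure_pmf_finite finite_set_gossip_step expectation_alpha_gossip_step
      algebra_simps power2_eq_square)

lemma power2_mult_sum_le_mult_sum_minus_power2_diff: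
  fixes x y u :: real
  assumes "0 \<le> x" "0 \<le> y" "0 \<le> u" "x + y + u \<le> 1"
  shows "u\<^sup>2 * (x + y) \<le> u * ((x + y) - (x - y)\<^sup>2)"
proof -
  have "(x - y)\<^sup>2 \<le> (x + y)\<^sup>2"
    using mult_nonneg_nonneg[OF assms(1,2)] by (simp add: power2_eq_square algebra_simps)
  also have "\<dots> \<le> (1 - u) * (x + y)"
    unfolding power2_eq_square using assms by (intro mult_right_mono) auto
  finally have "u * (x + y) \<le> (x + y) - (x - y)\<^sup>2"
    by (simp add: algebra_simps)
  from mult_left_mono[OF this assms(3)] show ?thesis
    by (simp add: power2_eq_square mult.assoc)
qed

lemma variance_gossip_step_sum_ge_undecided:
  fixes \<phi> :: "nat option \<Rightarrow> real"
  assumes "finite V" "V \<noteq> {}"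
  shows "real (card V) * undecided V opn * measure_pmf.variance (pmf_of_set V) (\<lambda>w. \<phi> (opn w))
       \<le> measure_pmf.variance (gossip_step V opn) (\<lambda>c. \<Sum>u\<in>V. \<phi> (c u))"
proof -
  have "real (card V) * undecided V opn * measure_pmf.variance (pmf_of_set V) (\<lambda>w. \<phi> (opn w))
      = (\<Sum>u\<in>V. of_bool (opn u = None) * measure_pmf.variance (pmf_of_set V) (\<lambda>w. \<phi> (opn w)))"
    using assms by (simp add: undecided_eq_sum sum_distrib_right[symmetric] del: sum_of_bool_eq)
  also have "\<dots> \<le> (\<Sum>u\<in>V. measure_pmf.variance (pmf_of_set V) (\<lambda>w. \<phi> (usd_update (opn u) (opn w))))"
    by (intro sum_mono) (auto simp: measure_pmf.variance_positive)
  also have "\<dots> = measure_pmf.variance (gossip_step V opn) (\<lambda>c. \<Sum>u\<in>V. \<phi> (c u))"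
    by (rule variance_gossip_step_sum[OF assms, symmetric])
  finally show ?thesis .
qed

lemma variance_alpha_diff_gossip_step_ge:
  assumes "finite V" "V \<noteq> {}" "i \<noteq> j"
  shows "measure_pmf.variance (gossip_step V opn) (\<lambda>c. alpha V c i - alpha V c j)
       \<ge> (undecided V opn)\<^sup>2 / real (card V) * (alpha V opn i + alpha V opn j)"
proof -
  define n where "n = real (card V)"
  define a where "a = alpha V opn i + alpha V opn j"
  define d where "d = alpha V opn i - alpha V opn j"
  define \<upsilon> where "\<upsilon> = undecided V opn"
  define \<phi> where "\<phi> x = (of_bool (x = Some i) - of_bool (x = Some j)) / n" for x
  have "n > 0"
    using assms by (simp add: n_def card_gt_0_iff)
  have X: "alpha V c i - alpha V c j = (\<Sum>u\<in>V. \<phi> (c u))" for c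
    using assms(1) by (simp add: \<phi>_def n_def alpha_eq_sum sum_divide_distrib[symmetric] sum_subtractf
        diff_divide_distrib del: sum_of_bool_eq)
  have \<phi>_squared: "(\<phi> x)\<^sup>2 = (of_bool (x = Some i) + of_bool (x = Some j)) / n\<^sup>2" for x
    using assms(3) by (auto simp: \<phi>_def power_divide)
  have partner_variance: "measure_pmf.variance (pmf_of_set V) (\<lambda>w. \<phi> (opn w)) = (a - d\<^sup>2) / n\<^sup>2"
    using assms(1,2) \<open>n > 0\<close>
    by (simp add: measure_pmf.variance_eq integrable_measure_pmf_finite \<phi>_squared
        expectation_pmf_of_set_Some_eq_alpha a_def d_def power_divide diff_divide_distrib)
      (simp add: \<phi>_def expectation_pmf_of_set_Some_eq_alpha integrable_measure_pmf_finite power_divide)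
  have "\<upsilon>\<^sup>2 * a \<le> \<upsilon> * (a - d\<^sup>2)"
    unfolding a_def d_def \<upsilon>_def
    using alpha_add_alpha_add_undecided_le[OF assms(1,3)]
    by (intro power2_mult_sum_le_mult_sum_minus_power2_diff) (simp_all add: alpha_def undecided_def)
  then have "\<upsilon>\<^sup>2 / n * a \<le> \<upsilon> * (a - d\<^sup>2) / n"
    using \<open>n > 0\<close> by (simp add: divide_right_mono)
  also have "\<dots> = n * \<upsilon> * ((a - d\<^sup>2) / n\<^sup>2)"
    using \<open>n > 0\<close> by (simp add: power2_eq_square)
  also have "\<dots> \<le> measure_pmf.variance (gossip_step V opn) (\<lambda>c. alpha V c i - alpha V c j)"
    using variance_gossip_step_sum_ge_undecided[OF assms(1,2), of opn \<phi>]
    unfolding X partner_variance by (simp add: n_def \<upsilon>_def)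
  finally show ?thesis
    by (simp add: n_def a_def \<upsilon>_def)
qed

lemma sum_power2_opinion_weights:
  assumes "finite V" "i \<noteq> j"
  shows "(\<Sum>u\<in>V. ((of_bool (c u = Some i) - b * of_bool (c u = Some j)) / real (card V))\<^sup>2)
       = (alpha V c i + b\<^sup>2 * alpha V c j) / real (card V)"
proof -
  have "((of_bool (x = Some i) - b * of_bool (x = Some j)) / real (card V))\<^sup>2
      = (of_bool (x = Some i) + b\<^sup>2 * of_bool (x = Some j)) / (real (card V))\<^sup>2" for x
    using assms(2) by (auto simp: power_divide)
  then show ?thesis
    using assms(1)
    by (simp add: alpha_eq_sum sum.distrib sum_distrib_left sum_divide_distrib[symmetric]
        power2_eq_square add_divide_distrib del: sum_of_bool_eq)
qed

lemma bernstein_cond_alpha_diff_gossip_step: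
  assumes "finite V" "V \<noteq> {}" "i \<noteq> j" "0 \<le> e"
  defines "X \<equiv> \<lambda>c. alpha V c i - (1 + e) * alpha V c j"
  shows "bernstein_cond (gossip_step V opn)
           (\<lambda>c. X c - measure_pmf.expectation (gossip_step V opn) X)
           (2 * (1 + e) / real (card V))
           (2 / real (card V) * (alpha V opn i + (1 + e)\<^sup>2 * alpha V opn j))"
proof -
  define n where "n = real (card V)"
  define \<phi> where "\<phi> x = (of_bool (x = Some i) - (1 + e) * of_bool (x = Some j)) / n" for x
  have "n > 0"
    using assms by (simp add: n_def card_gt_0_iff)
  have X_sum: "X = (\<lambda>c. \<Sum>u\<in>V. \<phi> (c u))"
    using assms(1) by (simp add: X_def \<phi>_def n_def alpha_eq_sum sum_divide_distrib[symmetric] sum_subtractf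
        sum_distrib_left diff_divide_distrib del: sum_of_bool_eq)
  have \<phi>_bounds: "- ((1 + e) / n) \<le> \<phi> x \<and> \<phi> x \<le> 1 / n" for x
    using assms(3,4) \<open>n > 0\<close> by (cases "x = Some i"; cases "x = Some j") (auto simp: \<phi>_def field_simps)
  have \<phi>_spread: "\<bar>\<phi> x - \<phi> y\<bar> \<le> 2 * (1 + e) / n" for x y
  proof -
    have "\<bar>\<phi> x - \<phi> y\<bar> \<le> (1 + e) / n + 1 / n"
      using \<phi>_bounds[of x] \<phi>_bounds[of y] unfolding abs_le_iff by linarith
    also have "\<dots> \<le> 2 * (1 + e) / n"
      using assms(4) \<open>n > 0\<close> by (simp add: field_simps)
    finally show ?thesis .
  qed
  have squares_sum: "(\<Sum>u\<in>V. (\<phi> (c u))\<^sup>2) = (alpha V c i + (1 + e)\<^sup>2 * alpha V c j) / n" for c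
    unfolding \<phi>_def n_def by (rule sum_power2_opinion_weights[OF assms(1,3)])
  have "measure_pmf.expectation (gossip_step V opn) (\<lambda>c. \<Sum>u\<in>V. (\<phi> (c u))\<^sup>2)
      = (measure_pmf.expectation (gossip_step V opn) (\<lambda>c. alpha V c i)
         + (1 + e)\<^sup>2 * measure_pmf.expectation (gossip_step V opn) (\<lambda>c. alpha V c j)) / n"
    using assms(1,2) by (simp add: squares_sum integrable_measure_pmf_finite finite_set_gossip_step)
  also have "\<dots> \<le> (2 * alpha V opn i + (1 + e)\<^sup>2 * (2 * alpha V opn j)) / n"
    using \<open>n > 0\<close> expectation_alpha_gossip_step_le[OF assms(1,2)]
    by (intro divide_right_mono add_mono mult_left_mono) auto
  also have "\<dots> = 2 / n * (alpha V opn i + (1 + e)\<^sup>2 * alpha V opn j)"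
    by (simp add: field_simps)
  finally show ?thesis
    unfolding X_sum n_def[symmetric]
    by (rule bernstein_cond_mono[OF bernstein_cond_gossip_step_sum[OF assms(1,2) \<phi>_spread]])
qed

theorem mainTheorem6:
  fixes V :: "'v set" and k i j :: nat and opn :: "'v \<Rightarrow> nat option" and \<epsilon> :: real
  assumes "finite V" and "V \<noteq> {}"
    and "\<forall>u\<in>V. opn u = None \<or> opn u \<in> Some ` {1..k}"
    and "i \<in> {1..k}" and "j \<in> {1..k}" and "i \<noteq> j"
    and "0 \<le> \<epsilon>" and "\<epsilon> \<le> 1"
  defines "n \<equiv> real (card V)"
    and "P \<equiv> measure_pmf (gossip_step V opn)"
    and "\<delta> \<equiv> (\<lambda>e c. alpha V c i - (1 + e) * alpha V c j)"
  shows
    "measure_pmf.expectation (gossip_step V opn) (\<delta> \<epsilon>) =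
        \<delta> \<epsilon> opn * (alpha V opn i + alpha V opn j + 2 * (1 - beta V k opn))
        + \<epsilon> * alpha V opn i * alpha V opn j
     \<and> (beta V k opn > 0 \<longrightarrow>
        measure_pmf.expectation (gossip_step V opn) (\<delta> 0) =
          \<delta> 0 opn * (1 + alpha V opn i + alpha V opn j
                       - (gamma V k opn + psi V k opn) / beta V k opn))
     \<and> measure_pmf.variance (gossip_step V opn) (\<delta> 0) \<ge>
          (1 - beta V k opn)\<^sup>2 / n * (alpha V opn i + alpha V opn j)
     \<and> bernstein_cond P
          (\<lambda>c. \<delta> \<epsilon> c - measure_pmf.expectation (gossip_step V opn) (\<delta> \<epsilon>))
          (2 * (1 + \<epsilon>) / n)
          (2 / n * (alpha V opn i + (1 + \<epsilon>)\<^sup>2 * alpha V opn j))"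
proof -
  have undecided: "1 - beta V k opn = undecided V opn"
    using beta_eq_1_minus_undecided[OF assms(1-3)] by simp
  have mean: "measure_pmf.expectation (gossip_step V opn) (\<delta> e) =
      \<delta> e opn * (alpha V opn i + alpha V opn j + 2 * (1 - beta V k opn))
      + e * alpha V opn i * alpha V opn j" for e
    unfolding \<delta>_def undecided by (rule expectation_alpha_diff_gossip_step[OF assms(1,2)])
  have mean_0: "beta V k opn > 0 \<longrightarrow>
      measure_pmf.expectation (gossip_step V opn) (\<delta> 0) =
        \<delta> 0 opn * (1 + alpha V opn i + alpha V opn j - (gamma V k opn + psi V k opn) / beta V k opn)"
  proof
    assume "beta V k opn > 0"
    then have "(gamma V k opn + psi V k opn) / beta V k opn = 2 * beta V k opn - 1"
      by (simp add: psi_def field_simps)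
    then show "measure_pmf.expectation (gossip_step V opn) (\<delta> 0) =
        \<delta> 0 opn * (1 + alpha V opn i + alpha V opn j - (gamma V k opn + psi V k opn) / beta V k opn)"
      unfolding mean[of 0] by (simp only:) (simp add: algebra_simps)
  qed
  have variance: "measure_pmf.variance (gossip_step V opn) (\<delta> 0) \<ge>
      (1 - beta V k opn)\<^sup>2 / n * (alpha V opn i + alpha V opn j)"
    using variance_alpha_diff_gossip_step_ge[OF assms(1,2,6)] by (simp add: \<delta>_def n_def undecided)
  have "bernstein_cond P
      (\<lambda>c. \<delta> \<epsilon> c - measure_pmf.expectation (gossip_step V opn) (\<delta> \<epsilon>))
      (2 * (1 + \<epsilon>) / n) (2 / n * (alpha V opn i + (1 + \<epsilon>)\<^sup>2 * alpha V opn j))"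
    unfolding P_def \<delta>_def n_def by (rule bernstein_cond_alpha_diff_gossip_step[OF assms(1,2,6,7)])
  with mean mean_0 variance show ?thesis
    by blast
qed

end
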